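(* Let $A>0$. For all $C_0,C_1\in B_i(S^1,\mathbb R^2)$, $$\sqrt{\ell(C_1)}-\sqrt{\ell(C_0)}\le\frac{1}{2\sqrt A}\,\mathrm{dist}^{B_i}_{G^A}(C_0,C_1).$$
   Context: $S^1=\mathbb R/2\pi\mathbb Z$, $\mathbb R^2\cong\mathbb C$. $\mathrm{Imm}=\mathrm{Imm}(S^1,\mathbb R^2)$ is the space of smooth immersions, $\mathrm{Diff}(S^1)$ acts on it by reparametrization, $B_i(S^1,\mathbb R^2)=\mathrm{Imm}/\mathrm{Diff}(S^1)$ with projection $\pi$. For $c\in\mathrm{Imm}$: $\ell(c)=\int_{S^1}|c_\theta|\,d\theta$ (invariant, so defined on $B_i$), $n_c=ic_\theta/|c_\theta|$, $\kappa_c=\det(c_\theta,c_{\theta\theta})/|c_\theta|^3$. For a smooth path $c:[0,1]\times S^1\to\mathbb R^2$ with each $c(t,\cdot)\in\mathrm{Imm}$, and $A\ge0$, $$L^{hor}_{G^A}(c)=\int_0^1\Big(\int_{S^1}(1+A\kappa_{c(t)}^2)\langle c_t,n_{c(t)}\rangle^2|c_\theta|\,d\theta\Big)^{1/2}dt,$$ and $\mathrm{dist}^{B_i}_{G^A}(C_0,C_1)$ is the infimum of $L^{hor}_{G^A}(c)$ over all such paths with $\pi(c(0,\cdot))=C_0$, $\pi(c(1,\cdot))=C_1$. *)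

theory Defs
  imports "HOL-Analysis.Analysis" "HOL-Library.Extended_Real"
begin

text \<open>S^1 = R / 2 pi Z: maps on S^1 are represented by 2pi-periodic maps on R; R^2 = C.\<close>

definition smooth_fun :: "(real \<Rightarrow> 'a::real_normed_vector) \<Rightarrow> bool" where
  "smooth_fun f \<longleftrightarrow> (\<exists>D. D 0 = f \<and>
      (\<forall>k x. (D k has_vector_derivative D (Suc k) x) (at x)))"

definition immersion :: "(real \<Rightarrow> complex) \<Rightarrow> bool" where
  "immersion c \<longleftrightarrow> smooth_fun c \<and> (\<forall>\<theta>. c (\<theta> + 2*pi) = c \<theta>) \<and>
      (\<forall>\<theta>. vector_derivative c (at \<theta>) \<noteq> 0)"

text \<open>Diff(S^1), represented by lifts to R (orientation preserving or reversing).\<close>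
definition circle_diff :: "(real \<Rightarrow> real) \<Rightarrow> bool" where
  "circle_diff \<phi> \<longleftrightarrow> smooth_fun \<phi> \<and> (\<forall>\<theta>. vector_derivative \<phi> (at \<theta>) \<noteq> 0) \<and>
      (\<exists>\<epsilon>\<in>{-1, 1}. \<forall>\<theta>. \<phi> (\<theta> + 2*pi) = \<phi> \<theta> + \<epsilon> * (2*pi))"

text \<open>pi c = pi d in B_i = Imm / Diff(S^1).\<close>
definition same_orbit :: "(real \<Rightarrow> complex) \<Rightarrow> (real \<Rightarrow> complex) \<Rightarrow> bool" where
  "same_orbit c d \<longleftrightarrow> (\<exists>\<phi>. circle_diff \<phi> \<and> c = d \<circ> \<phi>)"

definition len :: "(real \<Rightarrow> complex) \<Rightarrow> real" where
  "len c = integral {0..2*pi} (\<lambda>\<theta>. norm (vector_derivative c (at \<theta>)))"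

definition d_theta :: "(real \<Rightarrow> complex) \<Rightarrow> real \<Rightarrow> complex" where
  "d_theta c \<theta> = vector_derivative c (at \<theta>)"

definition normal :: "(real \<Rightarrow> complex) \<Rightarrow> real \<Rightarrow> complex" where
  "normal c \<theta> = \<i> * d_theta c \<theta> / complex_of_real (norm (d_theta c \<theta>))"

text \<open>det(a,b) = Im (cnj a * b).\<close>
definition curvature :: "(real \<Rightarrow> complex) \<Rightarrow> real \<Rightarrow> real" where
  "curvature c \<theta> = Im (cnj (d_theta c \<theta>) * d_theta (d_theta c) \<theta>) / norm (d_theta c \<theta>) ^ 3"

definition smooth_path :: "(real \<Rightarrow> real \<Rightarrow> complex) \<Rightarrow> bool" where
  "smooth_path c \<longleftrightarrow>
     (\<exists>U D. open U \<and> {0..1} \<times> UNIV \<subseteq> U \<and>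
        (\<forall>p\<in>U. D 0 0 p = case_prod c p) \<and>
        (\<forall>i j. continuous_on U (D i j)) \<and>
        (\<forall>i j t \<theta>. (t, \<theta>) \<in> U \<longrightarrow>
            ((\<lambda>s. D i j (s, \<theta>)) has_vector_derivative D (Suc i) j (t, \<theta>)) (at t) \<and>
            ((\<lambda>s. D i j (t, s)) has_vector_derivative D i (Suc j) (t, \<theta>)) (at \<theta>))) \<and>
     (\<forall>t\<in>{0..1}. immersion (c t))"

definition L_hor :: "real \<Rightarrow> (real \<Rightarrow> real \<Rightarrow> complex) \<Rightarrow> real" where
  "L_hor A c = integral {0..1} (\<lambda>t. sqrt (integral {0..2*pi} (\<lambda>\<theta>.
      (1 + A * (curvature (c t) \<theta>)\<^sup>2) *
      (vector_derivative (\<lambda>s. c s \<theta>) (at t) \<bullet> normal (c t) \<theta>)\<^sup>2 *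
      norm (d_theta (c t) \<theta>))))"

text \<open>dist^{B_i}_{G^A}(pi c0, pi c1); infimum in the extended reals (= +infinity if no path).\<close>
definition dist_Bi :: "real \<Rightarrow> (real \<Rightarrow> complex) \<Rightarrow> (real \<Rightarrow> complex) \<Rightarrow> ereal" where
  "dist_Bi A c0 c1 = Inf {ereal (L_hor A c) | c. smooth_path c \<and>
       same_orbit (c 0) c0 \<and> same_orbit (c 1) c1}"

end

theory Submission
  imports Defs
begin

(* Let l(t) be the length of c(t). The first variation of length, after an integration by parts
   in \<theta>, is l' = - \<integral> \<kappa> <c_t, n> |c_\<theta>| d\<theta>. By Cauchy-Schwarz with weight |c_\<theta>|,
   l'^2 \<le> l \<integral> \<kappa>^2 <c_t, n>^2 |c_\<theta>| d\<theta> \<le> (l / A) \<integral> (1 + A \<kappa>^2) <c_t, n>^2 |c_\<theta>| d\<theta>,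
   so (sqrt l)' = l' / (2 sqrt l) is bounded by 1 / (2 sqrt A) times the horizontal G^A-speed of
   the path. Integrating over [0,1] bounds sqrt (l 1) - sqrt (l 0) by L_hor / (2 sqrt A); lengths
   are invariant under reparametrisation, so taking the infimum over paths gives the claim. *)

lemma smooth_fun_has_continuous_derivative:
  assumes "smooth_fun f"
  obtains f' where "\<And>x. (f has_vector_derivative f' x) (at x)" "continuous_on UNIV f'"
proof -
  obtain D where D: "D 0 = f" "\<And>k x. (D k has_vector_derivative D (Suc k) x) (at x)"
    using assms unfolding smooth_fun_def by blast
  have "continuous_on UNIV (D 1)"
    by (rule continuous_on_vector_derivative) (use D(2) has_vector_derivative_at_within in auto)
  with D show thesis using that[of "D 1"] by auto
qed

lemma periodic_derivative_periodic:
  fixes f :: "real \<Rightarrow> 'a::real_normed_vector"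
  assumes "\<And>x. f (x + p) = f x" and "\<And>x. (f has_vector_derivative f' x) (at x)"
  shows "f' (x + p) = f' x"
proof -
  have "((f \<circ> (\<lambda>x. x + p)) has_vector_derivative (1 *\<^sub>R f' (x + p))) (at x)"
    by (rule vector_diff_chain_at) (auto intro!: derivative_eq_intros assms(2))
  moreover have "f \<circ> (\<lambda>x. x + p) = f"
    using assms(1) by (auto simp: fun_eq_iff)
  ultimately have "(f has_vector_derivative f' (x + p)) (at x)"
    by simp
  then show ?thesis
    using assms(2) vector_derivative_unique_at by blast
qed

lemma continuous_nonzero_sign_cases:
  fixes g :: "real \<Rightarrow> real"
  assumes "continuous_on UNIV g" and "\<And>x. g x \<noteq> 0"
  shows "(\<forall>x. g x > 0) \<or> (\<forall>x. g x < 0)"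
proof (rule ccontr)
  assume "\<not> ?thesis"
  then obtain a b where ab: "g a > 0" "g b < 0"
    using assms(2) by (meson linorder_neqE_linordered_idom)
  have cont: "\<And>u v. continuous_on {u..v} g"
    using assms(1) continuous_on_subset by blast
  show False
  proof (cases "a \<le> b")
    case True
    from IVT2'[of g b 0 a, OF _ _ True cont] ab assms(2) show False by force
  next
    case False
    from IVT'[of g b 0 a, OF _ _ _ cont] ab assms(2) False show False by force
  qed
qed

lemma continuous_has_primitive:
  fixes f :: "real \<Rightarrow> real"
  assumes "continuous_on UNIV f"
  obtains F where "\<And>x. (F has_real_derivative f x) (at x)"
proof -
  have "\<exists>F. \<forall>x::real. -\<infinity> < x \<longrightarrow> x < \<infinity> \<longrightarrow> (F has_vector_derivative f x) (at x)"
    by (rule einterval_antiderivative) (use assms continuous_on_eq_continuous_at in auto)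
  then show thesis
    using that by (auto simp: has_real_derivative_iff_has_vector_derivative)
qed

lemma primitive_periodic_increment:
  fixes F f :: "real \<Rightarrow> real"
  assumes F: "\<And>x. (F has_real_derivative f x) (at x)" and f: "\<And>x. f (x + p) = f x"
  shows "F (x + p) - F x = F p - F 0"
proof -
  have "((\<lambda>x. F (x + p) - F x) has_real_derivative f (x + p) * 1 - f x) (at x)" for x
    by (intro DERIV_diff DERIV_chain2[OF F] F) (auto intro!: derivative_eq_intros)
  then have "\<forall>x. ((\<lambda>x. F (x + p) - F x) has_real_derivative 0) (at x)"
    by (simp add: f)
  from DERIV_isconst_all[OF this, of x 0] show ?thesis
    by simp
qed

lemma circle_diff_derivative_sign:
  assumes "circle_diff \<phi>" and \<phi>': "\<And>x. (\<phi> has_real_derivative \<phi>' x) (at x)"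
    and "continuous_on UNIV \<phi>'"
  obtains \<epsilon> where "\<epsilon> \<in> {-1, 1}" "\<And>x. \<phi> (x + 2*pi) = \<phi> x + \<epsilon> * (2*pi)" "\<And>x. \<bar>\<phi>' x\<bar> = \<epsilon> * \<phi>' x"
proof -
  obtain \<epsilon> where \<epsilon>: "\<epsilon> \<in> {-1, 1}" "\<And>x. \<phi> (x + 2*pi) = \<phi> x + \<epsilon> * (2*pi)"
    using assms(1) unfolding circle_diff_def by blast
  have \<epsilon>_0: "\<phi> (2*pi) = \<phi> 0 + \<epsilon> * (2*pi)"
    using \<epsilon>(2)[of 0] by simp
  have "\<phi>' x \<noteq> 0" for x
    using assms(1) \<phi>'[of x] unfolding circle_diff_def
    by (metis has_real_derivative_iff_has_vector_derivative vector_derivative_at)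
  then consider "\<And>x. \<phi>' x > 0" | "\<And>x. \<phi>' x < 0"
    using continuous_nonzero_sign_cases assms(3) by blast
  then have "\<bar>\<phi>' x\<bar> = \<epsilon> * \<phi>' x" for x
  proof cases
    case 1
    then have "\<phi> 0 < \<phi> (0 + 2*pi)"
      using \<phi>' by (intro DERIV_pos_imp_increasing[where f=\<phi>]) auto
    then have "\<epsilon> = 1"
      using \<epsilon>(1) \<epsilon>_0 pi_gt_zero by auto
    with 1[of x] show ?thesis by simp
  next
    case 2
    then have "\<phi> (0 + 2*pi) < \<phi> 0"
      using \<phi>' by (intro DERIV_neg_imp_decreasing[where f=\<phi>]) auto
    then have "\<epsilon> = -1"
      using \<epsilon>(1) \<epsilon>_0 pi_gt_zero by auto
    with 2[of x] show ?thesis by simp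
  qed
  with \<epsilon> that show thesis by blast
qed

lemma integral_circle_diff_substitution:
  fixes f :: "real \<Rightarrow> real"
  assumes \<phi>: "circle_diff \<phi>" and \<phi>': "\<And>x. (\<phi> has_real_derivative \<phi>' x) (at x)" "continuous_on UNIV \<phi>'"
    and f: "continuous_on UNIV f" "\<And>x. f (x + 2*pi) = f x"
  shows "integral {0..2*pi} (\<lambda>x. \<bar>\<phi>' x\<bar> * f (\<phi> x)) = integral {0..2*pi} f"
proof -
  obtain \<epsilon> where \<epsilon>: "\<epsilon> \<in> {-1, 1}" "\<And>x. \<phi> (x + 2*pi) = \<phi> x + \<epsilon> * (2*pi)"
    and abs_\<phi>': "\<And>x. \<bar>\<phi>' x\<bar> = \<epsilon> * \<phi>' x"
    using circle_diff_derivative_sign[OF \<phi> \<phi>'] by blast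
  obtain F where F: "\<And>x. (F has_real_derivative f x) (at x)"
    using continuous_has_primitive[OF f(1)] by blast
  have "(f has_integral F (2*pi) - F 0) {0..2*pi}"
    using F by (intro fundamental_theorem_of_calculus[where f=F])
      (auto simp: has_real_derivative_iff_has_vector_derivative[symmetric] intro: has_field_derivative_at_within)
  then have integral_f: "integral {0..2*pi} f = F (2*pi) - F 0"
    by (rule integral_unique)
  have period: "F (y + 2*pi) - F y = F (2*pi) - F 0" for y
    using F f(2) by (rule primitive_periodic_increment)
  have "((\<lambda>x. \<phi>' x * f (\<phi> x)) has_integral F (\<phi> (2*pi)) - F (\<phi> 0)) {0..2*pi}"
  proof (rule fundamental_theorem_of_calculus[where f="\<lambda>x. F (\<phi> x)"])
    fix x
    have "((\<lambda>x. F (\<phi> x)) has_real_derivative f (\<phi> x) * \<phi>' x) (at x)"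
      by (rule DERIV_chain2[OF F \<phi>'(1)])
    then show "((\<lambda>x. F (\<phi> x)) has_vector_derivative \<phi>' x * f (\<phi> x)) (at x within {0..2*pi})"
      by (simp add: has_real_derivative_iff_has_vector_derivative[symmetric] mult.commute
          has_field_derivative_at_within)
  qed simp
  then have "((\<lambda>x. \<epsilon> * (\<phi>' x * f (\<phi> x))) has_integral \<epsilon> * (F (\<phi> (2*pi)) - F (\<phi> 0))) {0..2*pi}"
    by (rule has_integral_mult_right)
  then have "integral {0..2*pi} (\<lambda>x. \<bar>\<phi>' x\<bar> * f (\<phi> x)) = \<epsilon> * (F (\<phi> (2*pi)) - F (\<phi> 0))"
    unfolding abs_\<phi>' mult.assoc by (rule integral_unique)
  also have "\<dots> = \<epsilon> * (F (\<phi> 0 + \<epsilon> * (2*pi)) - F (\<phi> 0))"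
    using \<epsilon>(2)[of 0] by simp
  also have "\<dots> = integral {0..2*pi} f"
  proof (cases "\<epsilon> = 1")
    case False
    with \<epsilon>(1) have "\<epsilon> = -1"
      by simp
    with period[of "\<phi> 0 - 2*pi"] integral_f show ?thesis
      by simp
  qed (use period[of "\<phi> 0"] integral_f in simp)
  finally show ?thesis .
qed

lemma len_comp_circle_diff:
  assumes d: "immersion d" and \<phi>: "circle_diff \<phi>"
  shows "len (d \<circ> \<phi>) = len d"
proof -
  obtain d' where d': "\<And>x. (d has_vector_derivative d' x) (at x)" "continuous_on UNIV d'"
    using d unfolding immersion_def by (meson smooth_fun_has_continuous_derivative)
  obtain \<phi>' where \<phi>': "\<And>x. (\<phi> has_real_derivative \<phi>' x) (at x)" "continuous_on UNIV \<phi>'"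
    using \<phi> unfolding circle_diff_def has_real_derivative_iff_has_vector_derivative
    by (meson smooth_fun_has_continuous_derivative)
  have d'_periodic: "norm (d' (x + 2*pi)) = norm (d' x)" for x
    using periodic_derivative_periodic[OF _ d'(1)] d unfolding immersion_def by metis
  have "vector_derivative (d \<circ> \<phi>) (at x) = \<phi>' x *\<^sub>R d' (\<phi> x)" for x
    using vector_diff_chain_at[OF \<phi>'(1)[unfolded has_real_derivative_iff_has_vector_derivative] d'(1)]
    by (rule vector_derivative_at)
  then have "len (d \<circ> \<phi>) = integral {0..2*pi} (\<lambda>x. \<bar>\<phi>' x\<bar> * norm (d' (\<phi> x)))"
    by (simp add: len_def)
  also have "\<dots> = integral {0..2*pi} (\<lambda>x. norm (d' x))"
    using d'(2) d'_periodic by (intro integral_circle_diff_substitution[OF \<phi> \<phi>'] continuous_on_norm)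
  also have "\<dots> = len d"
    by (simp add: len_def vector_derivative_at[OF d'(1)])
  finally show ?thesis .
qed

lemma same_orbit_len:
  assumes "immersion d" and "same_orbit c d"
  shows "len c = len d"
  using assms len_comp_circle_diff unfolding same_orbit_def by blast

lemma has_real_derivative_norm:
  fixes f :: "real \<Rightarrow> 'a::real_inner"
  assumes "(f has_vector_derivative f') (at x within S)" and "f x \<noteq> 0"
  shows "((\<lambda>y. norm (f y)) has_real_derivative (f x \<bullet> f') / norm (f x)) (at x within S)"
  unfolding has_field_derivative_def
  by (rule has_derivative_eq_rhs,
      rule has_derivative_compose[OF assms(1)[unfolded has_vector_derivative_def]
        has_derivative_norm[OF assms(2)]])
    (auto simp: fun_eq_iff sgn_div_norm inner_commute field_simps)

lemma has_real_derivative_inner: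
  fixes f g :: "real \<Rightarrow> 'a::real_inner"
  assumes "(f has_vector_derivative f') (at x within S)"
    and "(g has_vector_derivative g') (at x within S)"
  shows "((\<lambda>y. f y \<bullet> g y) has_real_derivative (f x \<bullet> g' + f' \<bullet> g x)) (at x within S)"
  unfolding has_field_derivative_def
  by (rule has_derivative_eq_rhs,
      rule has_derivative_inner[OF assms[unfolded has_vector_derivative_def]])
    (auto simp: fun_eq_iff algebra_simps)

lemma complex_inner_Lagrange_identity:
  fixes a b v :: complex
  shows "(b \<bullet> v) * (norm a)\<^sup>2 - (a \<bullet> v) * (a \<bullet> b) = Im (cnj a * b) * Im (cnj a * v)"
  unfolding cmod_power2 by (simp add: inner_complex_def algebra_simps power2_eq_square)

lemma inner_rotated_unit:
  fixes a v :: complex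
  shows "v \<bullet> (\<i> * a / complex_of_real (norm a)) = Im (cnj a * v) / norm a"
  by (cases "a = 0") (simp_all add: inner_complex_def field_simps)

lemma weighted_Cauchy_Schwarz_integral:
  fixes u w :: "real \<Rightarrow> real"
  assumes uw: "(\<lambda>x. u x * w x) integrable_on S" and w: "w integrable_on S"
    and u2w: "(\<lambda>x. (u x)\<^sup>2 * w x) integrable_on S"
    and w_nonneg: "\<And>x. x \<in> S \<Longrightarrow> w x \<ge> 0"
  shows "(integral S (\<lambda>x. u x * w x))\<^sup>2 \<le> integral S w * integral S (\<lambda>x. (u x)\<^sup>2 * w x)"
proof -
  define M where "M = integral S (\<lambda>x. u x * w x)"
  define l where "l = integral S w"
  define J where "J = integral S (\<lambda>x. (u x)\<^sup>2 * w x)"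
  have quadratic: "2 * r * M \<le> r\<^sup>2 * l + J" for r
  proof -
    have pointwise: "2 * r * (u x * w x) \<le> r\<^sup>2 * w x + (u x)\<^sup>2 * w x" if "x \<in> S" for x
    proof -
      have "0 \<le> w x * (r - u x)\<^sup>2"
        using w_nonneg[OF that] by simp
      then show ?thesis
        by (simp add: power2_eq_square algebra_simps)
    qed
    have "((\<lambda>x. 2 * r * (u x * w x)) has_integral 2 * r * M) S"
      unfolding M_def using uw by (intro has_integral_mult_right integrable_integral)
    moreover have "((\<lambda>x. r\<^sup>2 * w x + (u x)\<^sup>2 * w x) has_integral r\<^sup>2 * l + J) S"
      unfolding l_def J_def using w u2w
      by (intro has_integral_add has_integral_mult_right integrable_integral)
    ultimately show ?thesis
      using pointwise by (rule has_integral_le)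
  qed
  have "l \<ge> 0"
    unfolding l_def using w w_nonneg by (rule integral_nonneg)
  then consider "l > 0" | "l = 0"
    by linarith
  then have "M\<^sup>2 \<le> l * J"
  proof cases
    case 1
    then have "M\<^sup>2 / l \<le> J"
      using quadratic[of "M / l"] by (simp add: power2_eq_square field_simps)
    with 1 show ?thesis
      by (simp add: field_simps)
  next
    case 2
    have "M = 0"
    proof (rule ccontr)
      assume "M \<noteq> 0"
      then have "2 * ((\<bar>J\<bar> + 1) / (2 * M)) * M = \<bar>J\<bar> + 1"
        by simp
      with quadratic[of "(\<bar>J\<bar> + 1) / (2 * M)"] 2 show False
        by simp
    qed
    with 2 show ?thesis by simp
  qed
  then show ?thesis
    unfolding M_def l_def J_def .
qed

lemma sqrt_increment_le_integral:
  fixes l l' g :: "real \<Rightarrow> real"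
  assumes "a \<le> b" and l_cont: "continuous_on {a..b} l" and l_pos: "\<And>t. t \<in> {a..b} \<Longrightarrow> l t > 0"
    and l': "\<And>t. t \<in> {a<..<b} \<Longrightarrow> (l has_real_derivative l' t) (at t)"
    and l'_le: "\<And>t. t \<in> {a<..<b} \<Longrightarrow> l' t \<le> 2 * sqrt (l t) * g t"
    and g: "g integrable_on {a..b}"
  shows "sqrt (l b) - sqrt (l a) \<le> integral {a..b} g"
proof -
  define h where "h t = (if t \<in> {a<..<b} then l' t / (2 * sqrt (l t)) else g t)" for t
  have "((\<lambda>t. sqrt (l t)) has_vector_derivative h t) (at t)" if t: "t \<in> {a<..<b}" for t
  proof -
    have "((\<lambda>t. sqrt (l t)) has_real_derivative inverse (sqrt (l t)) / 2 * l' t) (at t)"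
      using DERIV_chain2[OF DERIV_real_sqrt l'[OF t]] l_pos t by simp
    moreover have "inverse (sqrt (l t)) / 2 * l' t = h t"
      using t by (simp add: h_def divide_simps)
    ultimately show ?thesis
      unfolding has_real_derivative_iff_has_vector_derivative[symmetric] by (rule DERIV_cong)
  qed
  then have "(h has_integral sqrt (l b) - sqrt (l a)) {a..b}"
    using assms(1) l_cont
    by (intro fundamental_theorem_of_calculus_interior[where f="\<lambda>t. sqrt (l t)"] continuous_on_real_sqrt)
  moreover have "(g has_integral integral {a..b} g) {a..b}"
    using g by (rule integrable_integral)
  moreover have "h t \<le> g t" if "t \<in> {a..b}" for t
  proof (cases "t \<in> {a<..<b}")
    case True
    have "0 < 2 * sqrt (l t)"
      using l_pos that by simp
    then have "l' t / (2 * sqrt (l t)) \<le> g t"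
      using l'_le[OF True] by (simp add: pos_divide_le_eq mult_ac)
    with True show ?thesis
      by (simp add: h_def)
  next
    case False
    then have "h t = g t"
      unfolding h_def by (rule if_not_P)
    then show ?thesis
      by simp
  qed
  ultimately show ?thesis
    by (rule has_integral_le)
qed

lemma continuous_on_Pair_slice:
  assumes "continuous_on (S \<times> T) F" and "s \<in> S"
  shows "continuous_on T (\<lambda>t. F (s, t))"
  by (rule continuous_on_compose2[OF assms(1)])
    (use assms(2) in \<open>auto intro!: continuous_on_Pair continuous_on_const continuous_on_id\<close>)

locale immersion_homotopy =
  fixes c :: "real \<Rightarrow> real \<Rightarrow> complex"
    and U :: "(real \<times> real) set"
    and D :: "nat \<Rightarrow> nat \<Rightarrow> real \<times> real \<Rightarrow> complex"
  assumes open_U: "open U"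
    and strip_subset: "{0..1} \<times> UNIV \<subseteq> U"
    and D_0_0: "\<And>p. p \<in> U \<Longrightarrow> D 0 0 p = case_prod c p"
    and continuous_D: "\<And>i j. continuous_on U (D i j)"
    and D_deriv_time: "\<And>i j t \<theta>. (t, \<theta>) \<in> U \<Longrightarrow>
      ((\<lambda>s. D i j (s, \<theta>)) has_vector_derivative D (Suc i) j (t, \<theta>)) (at t)"
    and D_deriv_angle: "\<And>i j t \<theta>. (t, \<theta>) \<in> U \<Longrightarrow>
      ((\<lambda>s. D i j (t, s)) has_vector_derivative D i (Suc j) (t, \<theta>)) (at \<theta>)"
    and immersion_slice: "\<And>t. t \<in> {0..1} \<Longrightarrow> immersion (c t)"

lemma smooth_path_imp_immersion_homotopy:
  assumes "smooth_path c"
  obtains U D where "immersion_homotopy c U D"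
proof -
  from assms obtain U D where "open U" and "{0..1} \<times> UNIV \<subseteq> U"
    and "\<forall>p\<in>U. D 0 0 p = case_prod c p" and "\<forall>i j. continuous_on U (D i j)"
    and "\<forall>i j t \<theta>. (t, \<theta>) \<in> U \<longrightarrow>
      ((\<lambda>s. D i j (s, \<theta>)) has_vector_derivative D (Suc i) j (t, \<theta>)) (at t) \<and>
      ((\<lambda>s. D i j (t, s)) has_vector_derivative D i (Suc j) (t, \<theta>)) (at \<theta>)"
    and "\<forall>t\<in>{0..1}. immersion (c t)"
    unfolding smooth_path_def by blast
  then have "immersion_homotopy c U D"
    unfolding immersion_homotopy_def by auto
  then show thesis
    by (rule that)
qed

context immersion_homotopy
begin

lemma in_U: "t \<in> {0..1} \<Longrightarrow> (t, \<theta>) \<in> U"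
  using strip_subset by auto

lemma slice_eq: "t \<in> {0..1} \<Longrightarrow> c t = (\<lambda>\<theta>. D 0 0 (t, \<theta>))"
  using D_0_0 in_U by auto

lemma D_0_0_angle_derivative:
  "t \<in> {0..1} \<Longrightarrow> ((\<lambda>s. D 0 0 (t, s)) has_vector_derivative D 0 1 (t, \<theta>)) (at \<theta>)"
  using D_deriv_angle[OF in_U, where i=0 and j=0] by simp

lemma D_0_1_angle_derivative:
  "t \<in> {0..1} \<Longrightarrow> ((\<lambda>s. D 0 1 (t, s)) has_vector_derivative D 0 2 (t, \<theta>)) (at \<theta>)"
  using D_deriv_angle[OF in_U, where i=0 and j=1] by (simp add: numeral_2_eq_2)

lemma d_theta_slice:
  assumes t: "t \<in> {0..1}"
  shows "d_theta (c t) \<theta> = D 0 1 (t, \<theta>)"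
  unfolding d_theta_def slice_eq[OF t] by (rule vector_derivative_at[OF D_0_0_angle_derivative[OF t]])

lemma d_theta_d_theta_slice:
  assumes t: "t \<in> {0..1}"
  shows "d_theta (d_theta (c t)) \<theta> = D 0 2 (t, \<theta>)"
proof -
  have "d_theta (c t) = (\<lambda>\<theta>. D 0 1 (t, \<theta>))"
    using d_theta_slice[OF t] by auto
  then show ?thesis
    unfolding d_theta_def[of "d_theta (c t)"]
    by (simp only:) (rule vector_derivative_at[OF D_0_1_angle_derivative[OF t]])
qed

lemma time_derivative_slice:
  assumes t: "t \<in> {0..1}"
  shows "vector_derivative (\<lambda>s. c s \<theta>) (at t) = D 1 0 (t, \<theta>)"
proof -
  have "((\<lambda>s. c s \<theta>) has_vector_derivative D 1 0 (t, \<theta>)) (at t)"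
  proof (rule has_vector_derivative_transform_within_open)
    show "((\<lambda>s. D 0 0 (s, \<theta>)) has_vector_derivative D 1 0 (t, \<theta>)) (at t)"
      using D_deriv_time[OF in_U[OF t], where i=0 and j=0] by simp
    show "open ((\<lambda>s. (s, \<theta>)) -` U)"
      by (rule open_vimage[OF open_U]) (intro continuous_intros)
    show "t \<in> (\<lambda>s. (s, \<theta>)) -` U"
      using in_U[OF t] by simp
  qed (simp add: D_0_0)
  then show ?thesis
    by (rule vector_derivative_at)
qed

lemma D_0_1_nonzero: "t \<in> {0..1} \<Longrightarrow> D 0 1 (t, \<theta>) \<noteq> 0"
  using immersion_slice d_theta_slice unfolding immersion_def d_theta_def by metis

lemma D_0_1_periodic:
  assumes t: "t \<in> {0..1}"
  shows "D 0 1 (t, \<theta> + 2*pi) = D 0 1 (t, \<theta>)"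
proof (rule periodic_derivative_periodic[where f="\<lambda>s. D 0 0 (t, s)"])
  show "D 0 0 (t, x + 2*pi) = D 0 0 (t, x)" for x
    using immersion_slice[OF t] unfolding immersion_def slice_eq[OF t] by simp
  show "((\<lambda>s. D 0 0 (t, s)) has_vector_derivative D 0 1 (t, x)) (at x)" for x
    using D_0_0_angle_derivative[OF t] .
qed

lemma D_1_0_periodic:
  assumes t: "t \<in> {0<..<1}"
  shows "D 1 0 (t, \<theta> + 2*pi) = D 1 0 (t, \<theta>)"
proof -
  have t01: "t \<in> {0..1}"
    using t by simp
  have "((\<lambda>s. D 0 0 (s, \<theta>)) has_vector_derivative D 1 0 (t, \<theta> + 2*pi)) (at t)"
  proof (rule has_vector_derivative_transform_within_open[OF _ open_greaterThanLessThan t])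
    show "((\<lambda>s. D 0 0 (s, \<theta> + 2*pi)) has_vector_derivative D 1 0 (t, \<theta> + 2*pi)) (at t)"
      using D_deriv_time[OF in_U[OF t01], where i=0 and j=0] by simp
    show "D 0 0 (s, \<theta> + 2*pi) = D 0 0 (s, \<theta>)" if "s \<in> {0<..<1}" for s
    proof -
      have s: "s \<in> {0..1}"
        using that by simp
      show ?thesis
        using immersion_slice[OF s] unfolding immersion_def slice_eq[OF s] by simp
    qed
  qed
  moreover have "((\<lambda>s. D 0 0 (s, \<theta>)) has_vector_derivative D 1 0 (t, \<theta>)) (at t)"
    using D_deriv_time[OF in_U[OF t01], where i=0 and j=0] by simp
  ultimately show ?thesis
    by (rule vector_derivative_unique_at)
qed

lemma continuous_on_D_strip: "S \<subseteq> {0..1} \<times> UNIV \<Longrightarrow> continuous_on S (D i j)"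
  using continuous_D continuous_on_subset strip_subset by blast

lemma D_0_1_nonzero_strip: "p \<in> {0..1} \<times> UNIV \<Longrightarrow> D 0 (Suc 0) p \<noteq> 0"
  using D_0_1_nonzero by auto

definition curv :: "real \<times> real \<Rightarrow> real" where
  "curv p = Im (cnj (D 0 1 p) * D 0 2 p) / norm (D 0 1 p) ^ 3"

definition normal_velocity :: "real \<times> real \<Rightarrow> real" where
  "normal_velocity p = D 1 0 p \<bullet> (\<i> * D 0 1 p / complex_of_real (norm (D 0 1 p)))"

definition speed_time_derivative :: "real \<times> real \<Rightarrow> real" where
  "speed_time_derivative p = (D 0 1 p \<bullet> D 1 1 p) / norm (D 0 1 p)"

definition bending :: "real \<times> real \<Rightarrow> real" where
  "bending p = curv p * normal_velocity p * norm (D 0 1 p)"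

definition slice_length :: "real \<Rightarrow> real" where
  "slice_length t = integral {0..2*pi} (\<lambda>\<theta>. norm (D 0 1 (t, \<theta>)))"

definition horizontal_density :: "real \<Rightarrow> real \<times> real \<Rightarrow> real" where
  "horizontal_density A p = (1 + A * (curv p)\<^sup>2) * (normal_velocity p)\<^sup>2 * norm (D 0 1 p)"

definition horizontal_norm_sq :: "real \<Rightarrow> real \<Rightarrow> real" where
  "horizontal_norm_sq A t = integral {0..2*pi} (\<lambda>\<theta>. horizontal_density A (t, \<theta>))"

lemma len_slice: "t \<in> {0..1} \<Longrightarrow> len (c t) = slice_length t"
  unfolding len_def slice_length_def using d_theta_slice by (simp add: d_theta_def)

lemma L_hor_eq: "L_hor A c = integral {0..1} (\<lambda>t. sqrt (horizontal_norm_sq A t))"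
  unfolding L_hor_def horizontal_norm_sq_def horizontal_density_def curv_def normal_velocity_def
  by (intro integral_cong) (simp add: curvature_def normal_def d_theta_slice
      d_theta_d_theta_slice time_derivative_slice)

lemma continuous_on_speed: "S \<subseteq> {0..1} \<times> UNIV \<Longrightarrow> continuous_on S (\<lambda>p. norm (D 0 1 p))"
  by (intro continuous_on_norm continuous_on_D_strip)

lemma continuous_on_curv: "S \<subseteq> {0..1} \<times> UNIV \<Longrightarrow> continuous_on S curv"
  unfolding curv_def using D_0_1_nonzero_strip
  by (intro continuous_intros continuous_on_D_strip) auto

lemma continuous_on_normal_velocity: "S \<subseteq> {0..1} \<times> UNIV \<Longrightarrow> continuous_on S normal_velocity"
  unfolding normal_velocity_def using D_0_1_nonzero_strip
  by (intro continuous_intros continuous_on_D_strip) auto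

lemma continuous_on_speed_time_derivative:
  "S \<subseteq> {0..1} \<times> UNIV \<Longrightarrow> continuous_on S speed_time_derivative"
  unfolding speed_time_derivative_def using D_0_1_nonzero_strip
  by (intro continuous_intros continuous_on_D_strip) auto

lemma continuous_on_horizontal_density:
  assumes "S \<subseteq> {0..1} \<times> UNIV"
  shows "continuous_on S (horizontal_density A)"
  unfolding horizontal_density_def
  by (intro continuous_intros continuous_on_curv continuous_on_normal_velocity continuous_on_D_strip assms)

lemma continuous_on_bending:
  assumes "S \<subseteq> {0..1} \<times> UNIV"
  shows "continuous_on S bending"
  unfolding bending_def
  by (intro continuous_intros continuous_on_curv continuous_on_normal_velocity continuous_on_D_strip assms)

lemma continuous_on_slice_length: "continuous_on {0..1} slice_length"
proof -
  have "continuous_on ({0..1} \<times> cbox 0 (2*pi)) (\<lambda>p. norm (D 0 1 p))"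
    by (rule continuous_on_speed) auto
  then show ?thesis
    using integral_continuous_on_param[where f="\<lambda>t \<theta>. norm (D 0 1 (t, \<theta>))" and a=0 and b="2*pi"]
    by (simp add: slice_length_def cbox_interval)
qed

lemma continuous_on_horizontal_norm_sq: "continuous_on {0..1} (horizontal_norm_sq A)"
proof -
  have "continuous_on ({0..1} \<times> cbox 0 (2*pi)) (horizontal_density A)"
    by (rule continuous_on_horizontal_density) auto
  then show ?thesis
    using integral_continuous_on_param[where f="\<lambda>t \<theta>. horizontal_density A (t, \<theta>)" and a=0 and b="2*pi"]
    by (simp add: horizontal_norm_sq_def cbox_interval)
qed

lemma integrable_slice:
  fixes F :: "real \<times> real \<Rightarrow> real"
  assumes "continuous_on ({0..1} \<times> {0..2*pi}) F" and "t \<in> {0..1}"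
  shows "(\<lambda>\<theta>. F (t, \<theta>)) integrable_on {0..2*pi}"
  using continuous_on_Pair_slice[OF assms] by (rule integrable_continuous_interval)

lemma slice_length_pos:
  assumes t: "t \<in> {0..1}"
  shows "slice_length t > 0"
proof -
  have "continuous_on ({0..1} \<times> {0..2*pi}) (\<lambda>p. norm (D 0 1 p))"
    by (rule continuous_on_speed) auto
  from continuous_on_Pair_slice[OF this t]
  have cont: "continuous_on {0..2*pi} (\<lambda>\<theta>. norm (D 0 1 (t, \<theta>)))" .
  obtain \<theta>0 where "\<theta>0 \<in> {0..2*pi}"
    and min: "\<And>\<theta>. \<theta> \<in> {0..2*pi} \<Longrightarrow> norm (D 0 1 (t, \<theta>0)) \<le> norm (D 0 1 (t, \<theta>))"
    using continuous_attains_inf[OF compact_Icc _ cont] by auto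
  have "0 < 2*pi * norm (D 0 1 (t, \<theta>0))"
    using D_0_1_nonzero[OF t] by simp
  also have "\<dots> = integral {0..2*pi} (\<lambda>\<theta>. norm (D 0 1 (t, \<theta>0)))"
    by simp
  also have "\<dots> \<le> slice_length t"
    unfolding slice_length_def
    by (rule integral_le) (use min cont integrable_continuous_interval in auto)
  finally show ?thesis .
qed

lemma speed_has_time_derivative:
  assumes t: "t \<in> {0..1}"
  shows "((\<lambda>s. norm (D 0 1 (s, \<theta>))) has_real_derivative speed_time_derivative (t, \<theta>)) (at t)"
proof -
  have "((\<lambda>s. D 0 1 (s, \<theta>)) has_vector_derivative D 1 1 (t, \<theta>)) (at t)"
    using D_deriv_time[OF in_U[OF t], where i=0 and j=1] by simp
  from has_real_derivative_norm[OF this D_0_1_nonzero[OF t]] show ?thesis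
    unfolding speed_time_derivative_def .
qed

lemma slice_length_has_derivative:
  assumes t: "t \<in> {0<..<1}"
  shows "(slice_length has_real_derivative integral {0..2*pi} (\<lambda>\<theta>. speed_time_derivative (t, \<theta>))) (at t)"
proof -
  have "((\<lambda>x. integral (cbox 0 (2*pi)) (\<lambda>\<theta>. norm (D 0 1 (x, \<theta>)))) has_real_derivative
      integral (cbox 0 (2*pi)) (\<lambda>\<theta>. speed_time_derivative (t, \<theta>))) (at t within {0<..<1})"
  proof (rule leibniz_rule_field_derivative[where fx="\<lambda>x \<theta>. speed_time_derivative (x, \<theta>)"])
    show "((\<lambda>x. norm (D 0 1 (x, \<theta>))) has_real_derivative speed_time_derivative (x, \<theta>)) (at x within {0<..<1})"
      if "x \<in> {0<..<1}" for x \<theta>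
      using speed_has_time_derivative[of x \<theta>] that by (auto intro: has_field_derivative_at_within)
    show "(\<lambda>\<theta>. norm (D 0 1 (x, \<theta>))) integrable_on cbox 0 (2*pi)" if "x \<in> {0<..<1}" for x
      unfolding cbox_interval using that
      by (intro integrable_slice[where F="\<lambda>p. norm (D 0 1 p)"] continuous_on_speed) auto
    show "continuous_on ({0<..<1} \<times> cbox 0 (2*pi)) (\<lambda>(x, \<theta>). speed_time_derivative (x, \<theta>))"
      by (simp add: continuous_on_speed_time_derivative subset_iff)
  qed (use t in auto)
  then show ?thesis
    unfolding slice_length_def cbox_interval using at_within_open[OF t open_greaterThanLessThan] by simp
qed

lemma first_variation_of_length:
  assumes t: "t \<in> {0<..<1}"
  shows "integral {0..2*pi} (\<lambda>\<theta>. speed_time_derivative (t, \<theta>)) = - integral {0..2*pi} (\<lambda>\<theta>. bending (t, \<theta>))"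
proof -
  have t01: "t \<in> {0..1}"
    using t by auto
  define ph where "ph = (\<lambda>\<theta>. (D 0 1 (t, \<theta>) \<bullet> D 1 0 (t, \<theta>)) / norm (D 0 1 (t, \<theta>)))"
  (* Integration by parts: ph is periodic and its derivative is \<partial>_t |c_\<theta>| + \<kappa> <c_t, n> |c_\<theta>|. *)
  have ph_deriv: "(ph has_real_derivative speed_time_derivative (t, \<theta>) + bending (t, \<theta>)) (at \<theta>)" for \<theta>
  proof -
    let ?a = "D 0 1 (t, \<theta>)" and ?b = "D 0 2 (t, \<theta>)" and ?v = "D 1 0 (t, \<theta>)" and ?w = "D 1 1 (t, \<theta>)"
    have dv: "((\<lambda>s. D 1 0 (t, s)) has_vector_derivative ?w) (at \<theta>)"
      using D_deriv_angle[OF in_U[OF t01], where i=1 and j=0] by simp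
    have a0: "?a \<noteq> 0"
      by (rule D_0_1_nonzero[OF t01])
    have deriv: "(ph has_real_derivative
        ((?a \<bullet> ?w + ?b \<bullet> ?v) * norm ?a - (?a \<bullet> ?v) * ((?a \<bullet> ?b) / norm ?a)) / (norm ?a * norm ?a)) (at \<theta>)"
      unfolding ph_def using a0
      by (intro DERIV_divide has_real_derivative_inner[OF D_0_1_angle_derivative[OF t01] dv]
          has_real_derivative_norm[OF D_0_1_angle_derivative[OF t01]]) simp_all
    have "((?a \<bullet> ?w + ?b \<bullet> ?v) * norm ?a - (?a \<bullet> ?v) * ((?a \<bullet> ?b) / norm ?a)) / (norm ?a * norm ?a) =
        (?a \<bullet> ?w) / norm ?a + ((?b \<bullet> ?v) * (norm ?a)\<^sup>2 - (?a \<bullet> ?v) * (?a \<bullet> ?b)) / norm ?a ^ 3"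
      using a0 by (simp add: field_simps power2_eq_square power3_eq_cube)
    also have "\<dots> = speed_time_derivative (t, \<theta>) + bending (t, \<theta>)"
      unfolding complex_inner_Lagrange_identity bending_def speed_time_derivative_def curv_def
        normal_velocity_def inner_rotated_unit
      using a0 by (simp add: field_simps power3_eq_cube)
    finally show ?thesis
      by (rule DERIV_cong[OF deriv])
  qed
  have "((\<lambda>\<theta>. speed_time_derivative (t, \<theta>) + bending (t, \<theta>)) has_integral ph (2*pi) - ph 0) {0..2*pi}"
    using ph_deriv
    by (intro fundamental_theorem_of_calculus[where f=ph])
      (auto simp: has_real_derivative_iff_has_vector_derivative[symmetric] intro: has_field_derivative_at_within)
  moreover have "ph (2*pi) = ph 0"
    unfolding ph_def using D_0_1_periodic[OF t01, of 0] D_1_0_periodic[OF t, of 0] by simp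
  ultimately have "integral {0..2*pi} (\<lambda>\<theta>. speed_time_derivative (t, \<theta>) + bending (t, \<theta>)) = 0"
    by (simp add: integral_unique)
  moreover have "(\<lambda>\<theta>. speed_time_derivative (t, \<theta>)) integrable_on {0..2*pi}"
    by (rule integrable_slice[OF continuous_on_speed_time_derivative t01]) auto
  moreover have "(\<lambda>\<theta>. bending (t, \<theta>)) integrable_on {0..2*pi}"
    by (rule integrable_slice[OF continuous_on_bending t01]) auto
  ultimately show ?thesis
    by (simp add: integral_add)
qed

lemma bending_integral_sq_le:
  assumes A: "A > 0" and t: "t \<in> {0..1}"
  shows "(integral {0..2*pi} (\<lambda>\<theta>. bending (t, \<theta>)))\<^sup>2 \<le> slice_length t * horizontal_norm_sq A t / A"
proof -
  define u where "u \<theta> = curv (t, \<theta>) * normal_velocity (t, \<theta>)" for \<theta>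
  define w where "w \<theta> = norm (D 0 1 (t, \<theta>))" for \<theta>
  have "continuous_on ({0..1} \<times> {0..2*pi}) (\<lambda>p. curv p * normal_velocity p)"
    by (intro continuous_on_mult continuous_on_curv continuous_on_normal_velocity) auto
  from continuous_on_Pair_slice[OF this t] have u_cont: "continuous_on {0..2*pi} u"
    unfolding u_def .
  have "continuous_on ({0..1} \<times> {0..2*pi}) (\<lambda>p. norm (D 0 1 p))"
    by (rule continuous_on_speed) auto
  from continuous_on_Pair_slice[OF this t] have w_cont: "continuous_on {0..2*pi} w"
    unfolding w_def .
  have uw: "(\<lambda>\<theta>. u \<theta> * w \<theta>) integrable_on {0..2*pi}" and w: "w integrable_on {0..2*pi}"
    and u2w: "(\<lambda>\<theta>. (u \<theta>)\<^sup>2 * w \<theta>) integrable_on {0..2*pi}"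
    using u_cont w_cont by (auto intro!: integrable_continuous_interval continuous_on_mult continuous_on_power)
  have "(integral {0..2*pi} (\<lambda>\<theta>. u \<theta> * w \<theta>))\<^sup>2
      \<le> integral {0..2*pi} w * integral {0..2*pi} (\<lambda>\<theta>. (u \<theta>)\<^sup>2 * w \<theta>)"
    by (rule weighted_Cauchy_Schwarz_integral[OF uw w u2w]) (simp add: w_def)
  also have "integral {0..2*pi} (\<lambda>\<theta>. (u \<theta>)\<^sup>2 * w \<theta>) \<le> integral {0..2*pi} (\<lambda>\<theta>. horizontal_density A (t, \<theta>) / A)"
  proof (rule integral_le[OF u2w])
    show "(\<lambda>\<theta>. horizontal_density A (t, \<theta>) / A) integrable_on {0..2*pi}"
      by (intro integrable_on_divide integrable_slice[OF _ t] continuous_on_horizontal_density) auto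
    show "(u \<theta>)\<^sup>2 * w \<theta> \<le> horizontal_density A (t, \<theta>) / A" for \<theta>
    proof -
      have "horizontal_density A (t, \<theta>) / A = (normal_velocity (t, \<theta>))\<^sup>2 * w \<theta> / A + (u \<theta>)\<^sup>2 * w \<theta>"
        unfolding horizontal_density_def u_def w_def using A by (simp add: field_simps)
      moreover have "0 \<le> (normal_velocity (t, \<theta>))\<^sup>2 * w \<theta> / A"
        unfolding w_def using A by simp
      ultimately show ?thesis
        by linarith
    qed
  qed
  finally have "(integral {0..2*pi} (\<lambda>\<theta>. u \<theta> * w \<theta>))\<^sup>2 \<le> slice_length t * (horizontal_norm_sq A t / A)"
    using slice_length_pos[OF t] by (simp add: slice_length_def horizontal_norm_sq_def w_def mult_left_mono)
  then show ?thesis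
    by (simp add: bending_def u_def w_def)
qed

lemma sqrt_length_increment_le:
  assumes A: "A > 0"
  shows "sqrt (len (c 1)) - sqrt (len (c 0)) \<le> L_hor A c / (2 * sqrt A)"
proof -
  let ?g = "\<lambda>t. sqrt (horizontal_norm_sq A t) / (2 * sqrt A)"
  have "sqrt (slice_length 1) - sqrt (slice_length 0) \<le> integral {0..1} ?g"
  proof (rule sqrt_increment_le_integral[OF _ continuous_on_slice_length slice_length_pos slice_length_has_derivative])
    fix t :: real
    assume t: "t \<in> {0<..<1}"
    let ?l' = "integral {0..2*pi} (\<lambda>\<theta>. speed_time_derivative (t, \<theta>))"
    have "?l'\<^sup>2 \<le> slice_length t * horizontal_norm_sq A t / A"
      using bending_integral_sq_le[OF A] t by (simp add: first_variation_of_length[OF t])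
    then have "?l' \<le> sqrt (slice_length t * horizontal_norm_sq A t / A)"
      by (rule real_le_rsqrt)
    also have "\<dots> = 2 * sqrt (slice_length t) * ?g t"
      using A by (simp add: real_sqrt_mult real_sqrt_divide)
    finally show "?l' \<le> 2 * sqrt (slice_length t) * ?g t" .
  next
    show "?g integrable_on {0..1}"
      using A by (intro integrable_continuous_interval continuous_on_divide continuous_on_real_sqrt
          continuous_on_horizontal_norm_sq continuous_on_const) auto
  qed auto
  then show ?thesis
    by (simp add: len_slice L_hor_eq)
qed

end

lemma smooth_path_sqrt_len_increment_le:
  assumes "smooth_path c" and "A > 0"
  shows "sqrt (len (c 1)) - sqrt (len (c 0)) \<le> L_hor A c / (2 * sqrt A)"
proof -
  obtain U D where "immersion_homotopy c U D"
    using assms(1) by (rule smooth_path_imp_immersion_homotopy)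
  then show ?thesis
    using assms(2) by (rule immersion_homotopy.sqrt_length_increment_le)
qed

theorem proposition3p3:
  fixes A :: real and c0 c1 :: "real \<Rightarrow> complex"
  assumes "A > 0" and "immersion c0" and "immersion c1"
  shows "ereal (sqrt (len c1) - sqrt (len c0)) \<le> dist_Bi A c0 c1 / ereal (2 * sqrt A)"
proof -
  have scale_pos: "2 * sqrt A > 0"
    using assms(1) by simp
  have "ereal (2 * sqrt A) * ereal (sqrt (len c1) - sqrt (len c0)) \<le> dist_Bi A c0 c1"
    unfolding dist_Bi_def
  proof (rule Inf_greatest, clarify)
    fix c
    assume c: "smooth_path c" "same_orbit (c 0) c0" "same_orbit (c 1) c1"
    have "sqrt (len c1) - sqrt (len c0) \<le> L_hor A c / (2 * sqrt A)"
      using smooth_path_sqrt_len_increment_le[OF c(1) assms(1)]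
        same_orbit_len[OF assms(2) c(2)] same_orbit_len[OF assms(3) c(3)] by simp
    then show "ereal (2 * sqrt A) * ereal (sqrt (len c1) - sqrt (len c0)) \<le> ereal (L_hor A c)"
      using scale_pos by (simp add: field_simps)
  qed
  then show ?thesis
    using scale_pos by (simp add: ereal_le_divide_pos)
qed

end
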